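(* Let $k\ge 8$ and $H\in\mathcal{H}(k)$. If $C$ is a cycle in $H$ of odd weight that is not spanning (i.e. $V(C)\ne V(H)$), then $|N^1[C]|\ge\frac{2k+1}{3}$.
   Context: For $k\in\mathbb{N}$, $\mathcal{H}(k)$ is the family of graphs $H$ for which (i) there is a weight function $\omega:E(H)\to\{3,4,5\}$ such that $H$ contains no cycle $C$ whose weight $\omega(C)=\sum_{e\in E(C)}\omega(e)$ is odd and smaller than $2k+1$, and (ii) there is a spanning tree $T$ of $H$ all of whose edges have weight $3$. For a vertex set (or subgraph) $B$, $N^1[B]$ is the closed (unweighted) neighbourhood of $V(B)$: all vertices at graph distance at most $1$ from some vertex of $B$. *)

theory Defs
  imports Main "HOL-Library.Library"
begin

definition simple_graph :: "'a set \<Rightarrow> 'a set set \<Rightarrow> bool" where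
  "simple_graph V E \<longleftrightarrow> finite V \<and> (\<forall>e\<in>E. \<exists>u v. e = {u, v} \<and> u \<noteq> v \<and> u \<in> V \<and> v \<in> V)"

definition cycle_edges :: "'a list \<Rightarrow> 'a set set" where
  "cycle_edges cs = {{cs ! i, cs ! ((i + 1) mod length cs)} | i. i < length cs}"

definition is_cycle :: "'a set set \<Rightarrow> 'a list \<Rightarrow> bool" where
  "is_cycle E cs \<longleftrightarrow> length cs \<ge> 3 \<and> distinct cs \<and> cycle_edges cs \<subseteq> E"

definition weight :: "('a set \<Rightarrow> nat) \<Rightarrow> 'a list \<Rightarrow> nat" where
  "weight \<omega> cs = (\<Sum>e\<in>cycle_edges cs. \<omega> e)"

definition edge_rel :: "'a set set \<Rightarrow> ('a \<times> 'a) set" where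
  "edge_rel T = {(u, v). {u, v} \<in> T}"

definition spanning_tree :: "'a set \<Rightarrow> 'a set set \<Rightarrow> 'a set set \<Rightarrow> bool" where
  "spanning_tree V E T \<longleftrightarrow> T \<subseteq> E \<and> (\<forall>u\<in>V. \<forall>v\<in>V. (u, v) \<in> (edge_rel T)\<^sup>*)
     \<and> \<not> (\<exists>cs. is_cycle T cs)"

definition good_weighting :: "nat \<Rightarrow> 'a set \<Rightarrow> 'a set set \<Rightarrow> ('a set \<Rightarrow> nat) \<Rightarrow> bool" where
  "good_weighting k V E \<omega> \<longleftrightarrow>
     (\<forall>e\<in>E. \<omega> e \<in> {3, 4, 5})
   \<and> (\<forall>cs. is_cycle E cs \<longrightarrow> \<not> (odd (weight \<omega> cs) \<and> weight \<omega> cs < 2 * k + 1))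
   \<and> (\<exists>T. spanning_tree V E T \<and> (\<forall>e\<in>T. \<omega> e = 3))"

definition in_Hk :: "nat \<Rightarrow> 'a set \<Rightarrow> 'a set set \<Rightarrow> bool" where
  "in_Hk k V E \<longleftrightarrow> simple_graph V E \<and> (\<exists>\<omega>. good_weighting k V E \<omega>)"

definition N1 :: "'a set set \<Rightarrow> 'a set \<Rightarrow> 'a set" where
  "N1 E S = S \<union> {v. \<exists>u\<in>S. {u, v} \<in> E}"

end

theory Submission
  imports Defs
begin

(* Write X for the closed neighbourhood of the odd cycle C. On a spanning-tree path from a vertex
   of C to a vertex outside C, the first vertex that leaves C lies in X; so in the subgraph induced
   by X every vertex of C reaches a vertex outside C along weight-3 ("light") edges. For any graph
   with weights in {3, 4, 5}, such an escaping odd cycle forces an odd cycle of weight at most 3|V|;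
   applied to X this gives 2k + 1 <= 3|X|.

   The bound 3|V| is proved for a counterexample with the fewest edges. A light chord of C would
   split off an odd cycle that still escapes after deleting a suitable edge of the other arc, so C
   has no light chords. An outside vertex y that is light-adjacent to two vertices of C closes two
   ears, one of them odd; cutting away the rest of the cycle shows that an odd ear misses just one
   cycle edge, and since the complementary triangle through y is even, that edge has weight 4.
   Finally, each heavy cycle edge is charged to an outside vertex reached by a light edge from its
   maximal run of light cycle edges; an outside vertex then absorbs excess weight at most 3, whence
   weight C <= 3|C| + 3|V - C|. *)

section \<open>Cycles as vertex lists\<close>

definition cycle_edge :: "'a list \<Rightarrow> nat \<Rightarrow> 'a set" where
  "cycle_edge cs i = {cs ! i, cs ! (Suc i mod length cs)}"

lemma cycle_edges_conv_image: "cycle_edges cs = cycle_edge cs ` {..<length cs}"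
  unfolding cycle_edges_def cycle_edge_def by auto

lemma cycle_edge_in_cycle_edges: "i < length cs \<Longrightarrow> cycle_edge cs i \<in> cycle_edges cs"
  by (simp add: cycle_edges_conv_image)

lemma mod_less_if_less: "i < (n::nat) \<Longrightarrow> j mod n < n"
  by simp

lemma Suc_mod_length_less: "i < length cs \<Longrightarrow> Suc i mod length cs < length cs"
  by (rule mod_less_if_less)

lemma cycle_edge_subset_set: "i < length cs \<Longrightarrow> cycle_edge cs i \<subseteq> set cs"
  by (simp add: cycle_edge_def Suc_mod_length_less)

lemma cycle_edges_subset_set: "e \<in> cycle_edges cs \<Longrightarrow> e \<subseteq> set cs"
  using cycle_edge_subset_set by (auto simp: cycle_edges_conv_image)

lemma cycle_edge_last:
  assumes "cs \<noteq> []"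
  shows "cycle_edge cs (length cs - 1) = {cs ! (length cs - 1), cs ! 0}"
  using assms by (simp add: cycle_edge_def)

lemma cycle_edge_eq_doubletonD:
  assumes "distinct cs" "a < length cs" "b < length cs" "m < length cs"
    and "{cs ! a, cs ! b} = cycle_edge cs m"
  shows "a = m \<and> b = Suc m mod length cs \<or> b = m \<and> a = Suc m mod length cs"
proof -
  have "Suc m mod length cs < length cs" using assms(4) by (rule Suc_mod_length_less)
  then show ?thesis
    using assms by (auto simp: cycle_edge_def doubleton_eq_iff nth_eq_iff_index_eq)
qed

lemma inj_on_cycle_edge:
  assumes "distinct cs" "3 \<le> length cs"
  shows "inj_on (cycle_edge cs) {..<length cs}"
proof
  fix i k assume i: "i \<in> {..<length cs}" and k: "k \<in> {..<length cs}"
    and eq: "cycle_edge cs i = cycle_edge cs k"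
  let ?L = "length cs"
  have "i = k \<or> k = Suc i mod ?L \<and> i = Suc k mod ?L"
    using cycle_edge_eq_doubletonD[OF assms(1), of i "Suc i mod ?L" k] i k eq
    by (auto simp: cycle_edge_def Suc_mod_length_less)
  moreover have "\<not> (k = Suc i mod ?L \<and> i = Suc k mod ?L)"
    using i k assms(2) by (auto simp: mod_Suc)
  ultimately show "i = k" by blast
qed

lemma weight_conv_sum:
  assumes "distinct cs" "3 \<le> length cs"
  shows "weight w cs = (\<Sum>i<length cs. w (cycle_edge cs i))"
  unfolding weight_def cycle_edges_conv_image
  using sum.reindex[OF inj_on_cycle_edge[OF assms]] by simp

lemma cycle_edge_rotate:
  assumes "i < length cs"
  shows "cycle_edge (rotate m cs) i = cycle_edge cs ((i + m) mod length cs)"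
proof -
  have "(m + Suc i mod length cs) mod length cs = Suc ((i + m) mod length cs) mod length cs"
    by (simp add: mod_simps add.commute)
  then show ?thesis
    using assms by (simp add: cycle_edge_def nth_rotate Suc_mod_length_less add.commute)
qed

lemma cycle_edges_rotate_subset: "cycle_edges (rotate m cs) \<subseteq> cycle_edges cs"
  by (auto simp: cycle_edges_conv_image cycle_edge_rotate intro: mod_less_if_less)

lemma rotate_back: "rotate (length cs - m mod length cs) (rotate m cs) = cs"
proof (cases "cs = []")
  case False
  let ?L = "length cs"
  have "m mod ?L < ?L" using False by simp
  moreover have "?L * (m div ?L) + m mod ?L = m" by (rule mult_div_mod_eq)
  ultimately have "?L - m mod ?L + m = ?L * Suc (m div ?L)" unfolding mult_Suc_right by linarith
  then show ?thesis by (simp add: rotate_rotate)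
qed simp

lemma cycle_edges_rotate [simp]: "cycle_edges (rotate m cs) = cycle_edges cs"
  by (metis cycle_edges_rotate_subset rotate_back subset_antisym)

lemma is_cycle_rotate [simp]: "is_cycle E (rotate m cs) \<longleftrightarrow> is_cycle E cs"
  unfolding is_cycle_def by simp

lemma weight_rotate [simp]: "weight w (rotate m cs) = weight w cs"
  unfolding weight_def by simp

lemma nth_rotate_diff:
  assumes "p < length cs" "q < length cs"
  shows "rotate p cs ! ((q + length cs - p) mod length cs) = cs ! q"
proof -
  have "(p + (q + length cs - p) mod length cs) mod length cs = q"
    using assms by (simp add: mod_add_right_eq)
  then show ?thesis using assms by (simp add: nth_rotate mod_less_if_less)
qed

lemma rotate_nth_0:
  assumes "p < length cs"
  shows "rotate p cs ! 0 = cs ! p"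
proof -
  have "0 < length cs" using assms by linarith
  then show ?thesis using assms by (simp add: nth_rotate)
qed

lemma rotate_to_front:
  assumes "distinct cs" "p < length cs" "q < length cs" "p \<noteq> q"
  obtains j where "0 < j" "j < length cs" "rotate p cs ! 0 = cs ! p" "rotate p cs ! j = cs ! q"
proof
  let ?j = "(q + length cs - p) mod length cs"
  show front: "rotate p cs ! 0 = cs ! p" "?j < length cs"
    using assms(2) by (auto simp: rotate_nth_0 intro: mod_less_if_less)
  show "rotate p cs ! ?j = cs ! q" using nth_rotate_diff[OF assms(2,3)] .
  with front assms show "0 < ?j" by (metis gr0I nth_eq_iff_index_eq)
qed

lemma cycle_edge_take:
  assumes "j < length cs" "i < j"
  shows "cycle_edge (take (Suc j) cs) i = cycle_edge cs i"
proof -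
  have "length (take (Suc j) cs) = Suc j" using assms(1) by simp
  then show ?thesis using assms by (simp add: cycle_edge_def)
qed

lemma cycle_edge_take_last:
  assumes "j < length cs"
  shows "cycle_edge (take (Suc j) cs) j = {cs ! j, cs ! 0}"
proof -
  have "length (take (Suc j) cs) = Suc j" using assms by simp
  then show ?thesis using assms by (simp add: cycle_edge_def)
qed

lemma cycle_edges_take:
  assumes "j < length cs"
  shows "cycle_edges (take (Suc j) cs) = cycle_edge cs ` {..<j} \<union> {{cs ! j, cs ! 0}}"
proof -
  have "length (take (Suc j) cs) = Suc j" using assms by simp
  then have "cycle_edges (take (Suc j) cs) = cycle_edge (take (Suc j) cs) ` ({..<j} \<union> {j})"
    by (simp add: cycle_edges_conv_image lessThan_Suc)
  then show ?thesis using assms by (simp add: cycle_edge_take cycle_edge_take_last)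
qed

lemma weight_take:
  assumes "distinct cs" "2 \<le> j" "j < length cs"
  shows "weight w (take (Suc j) cs) = (\<Sum>i<j. w (cycle_edge cs i)) + w {cs ! j, cs ! 0}"
proof -
  have "length (take (Suc j) cs) = Suc j" using assms by simp
  then have "weight w (take (Suc j) cs) = (\<Sum>i<Suc j. w (cycle_edge (take (Suc j) cs) i))"
    using assms by (simp add: weight_conv_sum)
  then show ?thesis using assms by (simp add: cycle_edge_take cycle_edge_take_last)
qed

lemma cycle_edge_ear:
  assumes "j < length cs" "i < j"
  shows "cycle_edge (take (Suc j) cs @ [y]) i = cycle_edge cs i"
proof -
  have "length (take (Suc j) cs @ [y]) = Suc (Suc j)" using assms by simp
  then show ?thesis using assms by (simp add: cycle_edge_def nth_append)
qed

lemma cycle_edge_ear_attach: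
  assumes "j < length cs"
  shows "cycle_edge (take (Suc j) cs @ [y]) j = {cs ! j, y}"
    and "cycle_edge (take (Suc j) cs @ [y]) (Suc j) = {y, cs ! 0}"
proof -
  have "length (take (Suc j) cs @ [y]) = Suc (Suc j)" using assms by simp
  then show "cycle_edge (take (Suc j) cs @ [y]) j = {cs ! j, y}"
    and "cycle_edge (take (Suc j) cs @ [y]) (Suc j) = {y, cs ! 0}"
    using assms by (simp_all add: cycle_edge_def nth_append)
qed

lemma cycle_edges_ear:
  assumes "j < length cs"
  shows "cycle_edges (take (Suc j) cs @ [y]) = cycle_edge cs ` {..<j} \<union> {{cs ! j, y}, {y, cs ! 0}}"
proof -
  have "length (take (Suc j) cs @ [y]) = Suc (Suc j)" using assms by simp
  then have "cycle_edges (take (Suc j) cs @ [y]) = cycle_edge (take (Suc j) cs @ [y]) ` ({..<j} \<union> {j, Suc j})"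
    by (auto simp: cycle_edges_conv_image lessThan_Suc)
  then show ?thesis using assms by (simp add: cycle_edge_ear cycle_edge_ear_attach)
qed

lemma weight_ear:
  assumes "distinct cs" "y \<notin> set cs" "1 \<le> j" "j < length cs"
  shows "weight w (take (Suc j) cs @ [y]) = (\<Sum>i<j. w (cycle_edge cs i)) + w {cs ! j, y} + w {y, cs ! 0}"
proof -
  have "y \<notin> set (take (Suc j) cs)" using assms(2) by (meson in_set_takeD)
  moreover have "length (take (Suc j) cs @ [y]) = Suc (Suc j)" using assms by simp
  ultimately have "weight w (take (Suc j) cs @ [y]) = (\<Sum>i<Suc (Suc j). w (cycle_edge (take (Suc j) cs @ [y]) i))"
    using assms by (simp add: weight_conv_sum)
  then show ?thesis using assms by (simp add: cycle_edge_ear cycle_edge_ear_attach)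
qed

lemma rotate_nth_length_diff:
  assumes "0 < j" "j < length cs"
  shows "rotate j cs ! (length cs - j) = cs ! 0"
proof -
  have "cs \<noteq> []" using assms(2) by auto
  then show ?thesis using assms nth_rotate_diff[of j cs 0] by simp
qed

lemma sum_cycle_edge_rotate:
  assumes "j \<le> length cs"
  shows "(\<Sum>i<length cs - j. f (cycle_edge (rotate j cs) i)) = (\<Sum>i\<in>{j..<length cs}. f (cycle_edge cs i))"
proof -
  have "(\<Sum>i<length cs - j. f (cycle_edge (rotate j cs) i)) = (\<Sum>i<length cs - j. f (cycle_edge cs (i + j)))"
    by (rule sum.cong) (auto simp: cycle_edge_rotate)
  also have "\<dots> = (\<Sum>i\<in>{j..<length cs}. f (cycle_edge cs i))"
    using assms sum.shift_bounds_nat_ivl[of "\<lambda>i. f (cycle_edge cs i)" 0 j "length cs - j"]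
    by (simp add: atLeast0LessThan)
  finally show ?thesis .
qed

lemma sum_cycle_edge_split:
  assumes "distinct cs" "3 \<le> length cs" "j \<le> length cs"
  shows "(\<Sum>i<j. w (cycle_edge cs i)) + (\<Sum>i\<in>{j..<length cs}. w (cycle_edge cs i)) = weight w cs"
  using assms by (simp add: weight_conv_sum atLeast0LessThan[symmetric] sum.atLeastLessThan_concat)

lemma weight_chord_split:
  assumes "distinct cs" "2 \<le> j" "j + 2 \<le> length cs"
  shows "weight w (take (Suc j) cs) + weight w (take (Suc (length cs - j)) (rotate j cs))
    = weight w cs + 2 * w {cs ! 0, cs ! j}"
proof -
  let ?L = "length cs"
  have "rotate j cs ! (?L - j) = cs ! 0" "rotate j cs ! 0 = cs ! j"
    using assms by (simp_all add: rotate_nth_length_diff rotate_nth_0)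
  then have "weight w (take (Suc (?L - j)) (rotate j cs)) = (\<Sum>i\<in>{j..<?L}. w (cycle_edge cs i)) + w {cs ! 0, cs ! j}"
    using assms weight_take[of "rotate j cs" "?L - j" w] sum_cycle_edge_rotate[of j cs w] by simp
  moreover have "weight w (take (Suc j) cs) = (\<Sum>i<j. w (cycle_edge cs i)) + w {cs ! 0, cs ! j}"
    using assms by (simp add: weight_take insert_commute)
  ultimately show ?thesis using assms sum_cycle_edge_split[of cs j w] by simp
qed

lemma weight_ear_split:
  assumes "distinct cs" "3 \<le> length cs" "y \<notin> set cs" "1 \<le> j" "j < length cs"
  shows "weight w (take (Suc j) cs @ [y]) + weight w (take (Suc (length cs - j)) (rotate j cs) @ [y])
    = weight w cs + 2 * (w {cs ! 0, y} + w {cs ! j, y})"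
proof -
  let ?L = "length cs"
  have "rotate j cs ! (?L - j) = cs ! 0" "rotate j cs ! 0 = cs ! j"
    using assms by (simp_all add: rotate_nth_length_diff rotate_nth_0)
  then have "weight w (take (Suc (?L - j)) (rotate j cs) @ [y])
      = (\<Sum>i\<in>{j..<?L}. w (cycle_edge cs i)) + w {cs ! 0, y} + w {cs ! j, y}"
    using assms weight_ear[of "rotate j cs" y "?L - j" w] sum_cycle_edge_rotate[of j cs w]
    by (simp add: insert_commute)
  moreover have "weight w (take (Suc j) cs @ [y]) = (\<Sum>i<j. w (cycle_edge cs i)) + w {cs ! j, y} + w {cs ! 0, y}"
    using assms by (simp add: weight_ear insert_commute)
  ultimately show ?thesis using assms sum_cycle_edge_split[of cs j w] by simp
qed

lemma cycle_vertex_in_two_edges: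
  assumes "distinct cs" "3 \<le> length cs" "x \<in> set cs"
  obtains e e' where "e \<in> cycle_edges cs" "e' \<in> cycle_edges cs" "x \<in> e" "x \<in> e'" "e \<noteq> e'"
proof -
  let ?L = "length cs"
  obtain p where p: "p < ?L" "x = cs ! p" using assms(3) by (auto simp: in_set_conv_nth)
  define q where "q = (p + ?L - 1) mod ?L"
  have "Suc (p + ?L - 1) = p + ?L" using p(1) by simp
  then have q: "q < ?L" "Suc q mod ?L = p"
    using p(1) unfolding q_def by (auto simp: mod_Suc_eq intro: mod_less_if_less)
  have "q \<noteq> p"
  proof
    assume "q = p"
    then have "Suc p mod ?L = p" using q(2) by simp
    moreover have "Suc p mod ?L \<noteq> p"
    proof (cases "Suc p < ?L")
      case False
      then have "Suc p = ?L" using p(1) by linarith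
      then show ?thesis using assms(2) by simp
    qed simp
    ultimately show False by simp
  qed
  then have "cycle_edge cs p \<noteq> cycle_edge cs q"
    using inj_on_cycle_edge[OF assms(1,2)] p(1) q(1) by (auto dest: inj_onD)
  moreover have "x \<in> cycle_edge cs p" "x \<in> cycle_edge cs q"
    using p q by (auto simp: cycle_edge_def)
  ultimately show ?thesis
    using that[of "cycle_edge cs p" "cycle_edge cs q"] p(1) q(1) by (simp add: cycle_edge_in_cycle_edges)
qed

lemma cycle_edge_across_split:
  assumes "distinct cs" "Suc j < length cs"
    and "v \<in> set (take (Suc j) cs)" "v' \<in> set (drop (Suc j) cs)" "{v, v'} \<in> cycle_edges cs"
  shows "v = cs ! 0 \<or> v = cs ! j"
proof -
  let ?L = "length cs"
  obtain a where "a < length (take (Suc j) cs)" "v = take (Suc j) cs ! a"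
    using assms(3) by (auto simp: in_set_conv_nth)
  then have a: "a \<le> j" "v = cs ! a" by auto
  obtain t where "t < length (drop (Suc j) cs)" "v' = drop (Suc j) cs ! t"
    using assms(4) by (auto simp: in_set_conv_nth)
  then have t: "Suc j + t < ?L" "v' = cs ! (Suc j + t)" using assms(2) by auto
  obtain m where m: "m < ?L" "cycle_edge cs m = {v, v'}"
    using assms(5) by (auto simp: cycle_edges_conv_image)
  have pos: "a = m \<and> Suc j + t = Suc m mod ?L \<or> Suc j + t = m \<and> a = Suc m mod ?L"
    using cycle_edge_eq_doubletonD[OF assms(1), of a "Suc j + t" m] a t m assms(2) by simp
  have "a = 0 \<or> a = j"
  proof (cases "Suc m = ?L")
    case True
    then have "Suc m mod ?L = 0" by simp
    then show ?thesis using pos by auto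
  next
    case False
    then have "Suc m mod ?L = Suc m" using m(1) by simp
    then show ?thesis using pos a(1) by auto
  qed
  then show ?thesis using a(2) by auto
qed

section \<open>Simple graphs and light paths\<close>

lemma simple_graph_edgeD:
  assumes "simple_graph V E" "e \<in> E"
  obtains u v where "e = {u, v}" "u \<noteq> v" "u \<in> V" "v \<in> V"
  using assms unfolding simple_graph_def by blast

lemma simple_graph_edge_subset: "simple_graph V E \<Longrightarrow> e \<in> E \<Longrightarrow> e \<subseteq> V"
  by (elim simple_graph_edgeD) auto

lemma simple_graph_doubletonD:
  assumes "simple_graph V E" "{a, b} \<in> E"
  shows "a \<in> V" "b \<in> V" "a \<noteq> b"
proof -
  obtain u v where uv: "{a, b} = {u, v}" "u \<noteq> v" "u \<in> V" "v \<in> V"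
    using assms by (rule simple_graph_edgeD)
  then show "a \<in> V" "b \<in> V" by (auto simp: doubleton_eq_iff)
  show "a \<noteq> b" using uv by (metis doubleton_eq_iff)
qed

lemma simple_graph_finite_edges:
  assumes "simple_graph V E"
  shows "finite E"
proof -
  have "E \<subseteq> Pow V" using simple_graph_edge_subset[OF assms] by blast
  moreover have "finite V" using assms unfolding simple_graph_def by simp
  ultimately show ?thesis by (simp add: finite_subset)
qed

lemma simple_graph_subset: "simple_graph V E \<Longrightarrow> E' \<subseteq> E \<Longrightarrow> simple_graph V E'"
  unfolding simple_graph_def by blast

lemma cycle_vertices_subset:
  assumes "simple_graph V E" "is_cycle E cs"
  shows "set cs \<subseteq> V"
proof
  fix x assume "x \<in> set cs"
  then obtain i where "i < length cs" "x = cs ! i" by (auto simp: in_set_conv_nth)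
  then have "x \<in> cycle_edge cs i" "cycle_edge cs i \<in> E"
    using assms(2) cycle_edge_in_cycle_edges[of i cs] unfolding is_cycle_def
    by (auto simp: cycle_edge_def)
  then show "x \<in> V" using simple_graph_edge_subset[OF assms(1)] by blast
qed

lemma length_cycle_le_card:
  assumes "simple_graph V E" "is_cycle E cs"
  shows "length cs \<le> card V"
proof -
  have "finite V" using assms(1) by (simp add: simple_graph_def)
  then have "card (set cs) \<le> card V" using cycle_vertices_subset[OF assms] by (rule card_mono)
  then show ?thesis using assms(2) by (simp add: is_cycle_def distinct_card)
qed

lemma is_cycle_mono: "is_cycle E' cs \<Longrightarrow> E' \<subseteq> E \<Longrightarrow> is_cycle E cs"
  unfolding is_cycle_def by blast

lemma edge_rel_iff [simp]: "(u, v) \<in> edge_rel X \<longleftrightarrow> {u, v} \<in> X"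
  by (simp add: edge_rel_def)

lemma sym_edge_rel: "sym (edge_rel X)"
  by (auto intro!: symI simp: insert_commute)

lemma rtrancl_edge_rel_mono: "X \<subseteq> Y \<Longrightarrow> (edge_rel X)\<^sup>* \<subseteq> (edge_rel Y)\<^sup>*"
  by (rule rtrancl_mono) (auto simp: edge_rel_def)

lemma rtrancl_edge_rel_remove:
  assumes "(u, v) \<in> (edge_rel (X - {{u, v}}))\<^sup>*"
  shows "(edge_rel X)\<^sup>* \<subseteq> (edge_rel (X - {{u, v}}))\<^sup>*"
proof (rule rtrancl_subset_rtrancl, rule subrelI)
  fix a b assume ab: "(a, b) \<in> edge_rel X"
  have "(v, u) \<in> (edge_rel (X - {{u, v}}))\<^sup>*"
    using assms sym_edge_rel by (metis sym_rtrancl symD)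
  show "(a, b) \<in> (edge_rel (X - {{u, v}}))\<^sup>*"
  proof (cases "{a, b} = {u, v}")
    case True
    then have "a = u \<and> b = v \<or> a = v \<and> b = u" by (simp add: doubleton_eq_iff)
    then show ?thesis using assms \<open>(v, u) \<in> _\<close> by blast
  next
    case False
    then have "(a, b) \<in> edge_rel (X - {{u, v}})" using ab by simp
    then show ?thesis by blast
  qed
qed

lemma rtrancl_consecutive:
  assumes "\<And>i. a \<le> i \<Longrightarrow> i < b \<Longrightarrow> (f i, f (Suc i)) \<in> R" "a \<le> b"
  shows "(f a, f b) \<in> R\<^sup>*"
  using assms(2)
proof (induction b rule: dec_induct)
  case (step n)
  then have "(f n, f (Suc n)) \<in> R" using assms(1) by simp
  with step.IH show ?case by (rule rtrancl_into_rtrancl)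
qed simp

definition light_edges :: "'a set set \<Rightarrow> ('a set \<Rightarrow> nat) \<Rightarrow> 'a set set" where
  "light_edges E w = {e \<in> E. w e = 3}"

definition escapes :: "'a set \<Rightarrow> 'a set set \<Rightarrow> ('a set \<Rightarrow> nat) \<Rightarrow> 'a list \<Rightarrow> bool" where
  "escapes V E w cs \<longleftrightarrow> (\<forall>x\<in>set cs. \<exists>z\<in>V - set cs. (x, z) \<in> (edge_rel (light_edges E w))\<^sup>*)"

definition weighted_graph :: "'a set \<Rightarrow> 'a set set \<Rightarrow> ('a set \<Rightarrow> nat) \<Rightarrow> bool" where
  "weighted_graph V E w \<longleftrightarrow> simple_graph V E \<and> (\<forall>e\<in>E. w e \<in> {3, 4, 5})"

definition has_short_odd_cycle :: "'a set \<Rightarrow> 'a set set \<Rightarrow> ('a set \<Rightarrow> nat) \<Rightarrow> bool" where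
  "has_short_odd_cycle V E w \<longleftrightarrow> (\<exists>cs. is_cycle E cs \<and> odd (weight w cs) \<and> weight w cs \<le> 3 * card V)"

lemma light_edges_Diff: "light_edges (E - X) w = light_edges E w - X"
  by (auto simp: light_edges_def)

lemma weighted_graph_subset: "weighted_graph V E w \<Longrightarrow> E' \<subseteq> E \<Longrightarrow> weighted_graph V E' w"
  unfolding weighted_graph_def using simple_graph_subset by blast

lemma has_short_odd_cycle_mono:
  "has_short_odd_cycle V E' w \<Longrightarrow> E' \<subseteq> E \<Longrightarrow> has_short_odd_cycle V E w"
  unfolding has_short_odd_cycle_def using is_cycle_mono by blast

lemma escapes_rotate [simp]: "escapes V E w (rotate m cs) \<longleftrightarrow> escapes V E w cs"
  by (simp add: escapes_def)

lemma escapes_subcycle: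
  assumes "escapes V E w cs" "set D \<subseteq> set cs"
    and "(edge_rel (light_edges E w))\<^sup>* \<subseteq> (edge_rel (light_edges E' w'))\<^sup>*"
  shows "escapes V E' w' D"
  using assms unfolding escapes_def by blast

(* If the arc from position j back to 0 contains a heavy edge, deleting it keeps all light paths;
   otherwise delete its first edge, whose ends stay joined by the rest of the arc and the chord. *)
lemma light_arc_edge_removable:
  assumes cycle: "is_cycle E cs" and j: "Suc j < length cs"
    and chord: "{cs ! 0, cs ! j} \<in> light_edges E w"
  obtains i where "j \<le> i" "i < length cs"
    "(edge_rel (light_edges E w))\<^sup>* \<subseteq> (edge_rel (light_edges (E - {cycle_edge cs i}) w))\<^sup>*"
proof (cases "\<exists>i. j \<le> i \<and> i < length cs \<and> w (cycle_edge cs i) \<noteq> 3")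
  case True
  then obtain i where "j \<le> i" "i < length cs" "w (cycle_edge cs i) \<noteq> 3" by blast
  moreover from this have "light_edges (E - {cycle_edge cs i}) w = light_edges E w"
    by (auto simp: light_edges_def)
  ultimately show ?thesis using that by simp
next
  case False
  let ?L = "length cs" and ?e = "cycle_edge cs j"
  let ?R = "edge_rel (light_edges E w - {?e})"
  have dist: "distinct cs" and L3: "3 \<le> ?L" using cycle by (auto simp: is_cycle_def)
  have arc_step: "(cs ! (i mod ?L), cs ! (Suc i mod ?L)) \<in> ?R" if "Suc j \<le> i" "i < ?L" for i
  proof -
    have "cycle_edge cs i \<noteq> ?e"
      using inj_on_cycle_edge[OF dist L3] that j by (simp add: inj_on_eq_iff)
    moreover have "cycle_edge cs i \<in> E"
      using cycle cycle_edge_in_cycle_edges[of i cs] that by (auto simp: is_cycle_def)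
    ultimately have "cycle_edge cs i \<in> light_edges E w - {?e}"
      using False that by (simp add: light_edges_def)
    then show ?thesis using that by (simp add: cycle_edge_def)
  qed
  have "(cs ! (Suc j mod ?L), cs ! (?L mod ?L)) \<in> ?R\<^sup>*"
    by (rule rtrancl_consecutive[where f = "\<lambda>i. cs ! (i mod ?L)"]) (use arc_step j in auto)
  then have path: "(cs ! Suc j, cs ! 0) \<in> ?R\<^sup>*" using j by simp
  have "cs ! Suc j \<noteq> cs ! 0"
    using nth_eq_iff_index_eq[OF dist j less_trans[OF zero_less_Suc j]] by simp
  then have "{cs ! 0, cs ! j} \<noteq> ?e" using j by (auto simp: cycle_edge_def doubleton_eq_iff)
  then have "(cs ! 0, cs ! j) \<in> ?R" using chord by simp
  with path have "(cs ! Suc j, cs ! j) \<in> ?R\<^sup>*" by (rule rtrancl_into_rtrancl)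
  then have "(cs ! j, cs ! Suc j) \<in> ?R\<^sup>*" by (metis sym_edge_rel sym_rtrancl symD)
  then have "(edge_rel (light_edges E w))\<^sup>* \<subseteq> (edge_rel (light_edges E w - {?e}))\<^sup>*"
    using rtrancl_edge_rel_remove[of "cs ! j" "cs ! Suc j" "light_edges E w"] j
    by (simp add: cycle_edge_def)
  then show ?thesis using that[of j] j by (simp add: light_edges_Diff)
qed

section \<open>Charging heavy cycle edges to outside vertices\<close>

lemma choose_2_le_imp_sum_bound:
  fixes n s :: nat
  assumes "n choose 2 \<le> s" "s \<le> n"
  shows "s + 2 * (n - s) \<le> 3"
proof -
  have "n \<le> 3"
  proof (rule ccontr)
    assume "\<not> n \<le> 3"
    then have "n * 3 \<le> n * (n - 1)" by (intro mult_le_mono2) simp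
    then have "n * 3 div 2 \<le> n choose 2" unfolding choose_two by (rule div_le_mono)
    moreover have "n < n * 3 div 2" using \<open>\<not> n \<le> 3\<close> by presburger
    ultimately show False using assms by linarith
  qed
  then consider "n = 0" | "n = 1" | "n = 2" | "n = 3" by linarith
  then show ?thesis using assms by cases (simp_all add: choose_two)
qed

(* Call a pointing if P a b and v a <= 1 for some b in F. Each 2-subset of F is {a, b} with a
   pointing to b, and a points to at most one b; so C(|F|, 2) is at most the number s of pointing
   elements, whence |F| <= 3 and sum v F <= s + 2 (|F| - s) <= 3. *)
lemma sum_le_3_if_pairwise_pointing:
  fixes v :: "'b \<Rightarrow> nat"
  assumes "finite F" and le_2: "\<And>a. a \<in> F \<Longrightarrow> v a \<le> 2"
    and pairs: "\<And>a b. a \<in> F \<Longrightarrow> b \<in> F \<Longrightarrow> a \<noteq> b \<Longrightarrow> P a b \<and> v a \<le> 1 \<or> P b a \<and> v b \<le> 1"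
    and functional: "\<And>a b c. P a b \<Longrightarrow> P a c \<Longrightarrow> b = c"
  shows "sum v F \<le> 3"
proof -
  define S where "S = {a \<in> F. v a \<le> 1 \<and> (\<exists>b\<in>F. b \<noteq> a \<and> P a b)}"
  define succ where "succ a = (SOME b. b \<in> F \<and> b \<noteq> a \<and> P a b)" for a
  have pointer: "a \<in> S \<and> succ a = b" if "a \<in> F" "b \<in> F" "a \<noteq> b" "P a b" "v a \<le> 1" for a b
  proof -
    have "\<exists>b. b \<in> F \<and> b \<noteq> a \<and> P a b" using that by blast
    then have "P a (succ a)" unfolding succ_def by (rule someI2_ex) blast
    then have "succ a = b" using functional that(4) by blast
    moreover have "a \<in> S" unfolding S_def using that by auto
    ultimately show ?thesis by blast
  qed
  have "{B. B \<subseteq> F \<and> card B = 2} \<subseteq> (\<lambda>a. {a, succ a}) ` S"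
  proof
    fix B assume "B \<in> {B. B \<subseteq> F \<and> card B = 2}"
    then obtain a b where B: "B = {a, b}" "a \<noteq> b" "a \<in> F" "b \<in> F" by (auto simp: card_2_iff)
    from pairs[OF B(3,4,2)] show "B \<in> (\<lambda>a. {a, succ a}) ` S"
    proof
      assume "P a b \<and> v a \<le> 1"
      then have "a \<in> S" "B = {a, succ a}" using pointer[OF B(3,4,2)] B(1) by auto
      then show ?thesis by blast
    next
      assume "P b a \<and> v b \<le> 1"
      then have "b \<in> S" "B = {b, succ b}" using pointer[OF B(4,3) B(2)[symmetric]] B(1) by auto
      then show ?thesis by blast
    qed
  qed
  moreover have S: "S \<subseteq> F" "finite S" "card S \<le> card F"
    using assms(1) by (auto simp: S_def card_mono finite_subset)
  ultimately have "card F choose 2 \<le> card ((\<lambda>a. {a, succ a}) ` S)"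
    unfolding n_subsets[OF assms(1), symmetric] by (simp add: card_mono)
  also have "\<dots> \<le> card S" using S(2) by (rule card_image_le)
  finally have pairs_le: "card F choose 2 \<le> card S" .
  moreover have "sum v F \<le> card S + 2 * (card F - card S)"
  proof -
    have "sum v S \<le> card S" using sum_mono[of S v "\<lambda>_. 1"] by (auto simp: S_def)
    moreover have "sum v (F - S) \<le> 2 * card (F - S)" using sum_mono[of "F - S" v "\<lambda>_. 2"] le_2 by auto
    moreover have "sum v F = sum v S + sum v (F - S)" using assms(1) S(1) by (metis sum.subset_diff add.commute)
    ultimately show ?thesis using S by (simp add: card_Diff_subset)
  qed
  moreover have "card S + 2 * (card F - card S) \<le> 3"
    using choose_2_le_imp_sum_bound[OF pairs_le S(3)] .
  ultimately show ?thesis by linarith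
qed

locale charging =
  fixes V :: "'a set" and E :: "'a set set" and w :: "'a set \<Rightarrow> nat" and cs :: "'a list"
  assumes weighted: "weighted_graph V E w"
    and cycle: "is_cycle E cs"
    and escapes: "escapes V E w cs"
    and last_heavy: "w (cycle_edge cs (length cs - 1)) \<noteq> 3"
    and no_light_chord: "\<And>a b. a \<in> set cs \<Longrightarrow> b \<in> set cs \<Longrightarrow> {a, b} \<in> light_edges E w \<Longrightarrow>
      {a, b} \<in> cycle_edges cs"
    and light_ear: "\<And>y p q. y \<in> V - set cs \<Longrightarrow> p < length cs \<Longrightarrow> q < length cs \<Longrightarrow> p \<noteq> q \<Longrightarrow>
      {cs ! p, y} \<in> light_edges E w \<Longrightarrow> {cs ! q, y} \<in> light_edges E w \<Longrightarrow>
      \<exists>m<length cs. cycle_edge cs m = {cs ! p, cs ! q} \<and> w (cycle_edge cs m) = 4"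
begin

definition heavy :: "nat set" where
  "heavy = {i. i < length cs \<and> w (cycle_edge cs i) \<noteq> 3}"

(* As the last edge is heavy, arc k identifies the maximal run of light cycle edges through vertex k;
   the run belonging to a heavy edge i is the one that ends at vertex i. *)
definition arc :: "nat \<Rightarrow> nat" where
  "arc k = card {i \<in> heavy. i < k}"

lemma distinct: "distinct cs" and length_ge_3: "3 \<le> length cs"
  using cycle by (auto simp: is_cycle_def)

lemma cycle_edge_weight: "i < length cs \<Longrightarrow> w (cycle_edge cs i) \<in> {3, 4, 5}"
  using weighted cycle cycle_edge_in_cycle_edges unfolding weighted_graph_def is_cycle_def by blast

lemma finite_heavy: "finite heavy"
  by (simp add: heavy_def)

lemma arc_less: "i \<in> heavy \<Longrightarrow> i < k \<Longrightarrow> arc i < arc k"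
  unfolding arc_def using finite_heavy by (intro psubset_card_mono) auto

lemma inj_on_arc: "inj_on arc heavy"
  by (intro inj_onI) (metis arc_less less_irrefl nat_neq_iff)

lemma arc_Suc: "m \<notin> heavy \<Longrightarrow> arc (Suc m) = arc m"
  unfolding arc_def by (metis less_Suc_eq)

lemma arc_light_edge:
  assumes k: "k < length cs" "k' < length cs" and light: "{cs ! k, cs ! k'} \<in> light_edges E w"
  shows "arc k' = arc k"
proof -
  let ?L = "length cs"
  have "{cs ! k, cs ! k'} \<in> cycle_edges cs" using no_light_chord light k by simp
  then obtain m where m: "m < ?L" "cycle_edge cs m = {cs ! k, cs ! k'}"
    by (auto simp: cycle_edges_conv_image)
  have pos: "k = m \<and> k' = Suc m mod ?L \<or> k' = m \<and> k = Suc m mod ?L"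
    using cycle_edge_eq_doubletonD[OF distinct k m(1)] m(2) by simp
  have light_m: "m \<notin> heavy" using m light by (simp add: heavy_def light_edges_def)
  then have "m \<noteq> ?L - 1" using last_heavy length_ge_3 by (auto simp: heavy_def)
  then have "Suc m mod ?L = Suc m" using m(1) by simp
  then show ?thesis using pos arc_Suc[OF light_m] by auto
qed

lemma light_exit:
  assumes "i \<in> heavy"
  shows "\<exists>k y. k < length cs \<and> y \<in> V - set cs \<and> arc k = arc i \<and> {cs ! k, y} \<in> light_edges E w"
    (is ?exit)
proof -
  have i: "i < length cs" using assms by (simp add: heavy_def)
  obtain z where z: "z \<in> V - set cs" "(cs ! i, z) \<in> (edge_rel (light_edges E w))\<^sup>*"
    using escapes i unfolding escapes_def by (meson nth_mem)
  have "(\<exists>k<length cs. v = cs ! k \<and> arc k = arc i) \<or> ?exit"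
    if "(cs ! i, v) \<in> (edge_rel (light_edges E w))\<^sup>*" for v
    using that
  proof (induction rule: rtrancl_induct)
    case base
    then show ?case using i by blast
  next
    case (step v v')
    show ?case
    proof (cases ?exit)
      case False
      then obtain k where k: "k < length cs" "v = cs ! k" "arc k = arc i" using step.IH by blast
      have light: "{cs ! k, v'} \<in> light_edges E w" using step.hyps(2) k(2) by simp
      show ?thesis
      proof (cases "v' \<in> set cs")
        case True
        then obtain k' where "k' < length cs" "v' = cs ! k'" by (auto simp: in_set_conv_nth)
        then show ?thesis using arc_light_edge[OF k(1)] light k(3) by auto
      next
        case False
        have "v' \<in> V"
          using light weighted simple_graph_doubletonD(2) by (auto simp: light_edges_def weighted_graph_def)
        then show ?thesis using False k light by blast
      qed
    qed simp
  qed
  from this[OF z(2)] show ?exit using z(1) by auto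
qed

lemma exits_into_same_vertex:
  assumes exit: "\<And>i. i \<in> heavy \<Longrightarrow> kk i < length cs \<and> yy i \<in> V - set cs \<and> arc (kk i) = arc i
      \<and> {cs ! kk i, yy i} \<in> light_edges E w"
    and ab: "a \<in> heavy" "b \<in> heavy" "a \<noteq> b" "yy a = yy b"
  shows "cycle_edge cs a = {cs ! kk a, cs ! kk b} \<and> w (cycle_edge cs a) = 4
    \<or> cycle_edge cs b = {cs ! kk b, cs ! kk a} \<and> w (cycle_edge cs b) = 4"
proof -
  let ?L = "length cs"
  have same_exit: "i = i'" if "i \<in> heavy" "i' \<in> heavy" "arc (kk i) = arc i'" for i i'
  proof -
    have "arc i = arc i'" using exit[OF that(1)] that(3) by simp
    then show ?thesis using inj_on_arc that(1,2) by (simp add: inj_on_eq_iff)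
  qed
  have ea: "kk a < ?L" "yy a \<in> V - set cs" "arc (kk a) = arc a" "{cs ! kk a, yy a} \<in> light_edges E w"
    using exit[OF ab(1)] by auto
  have eb: "kk b < ?L" "arc (kk b) = arc b" "{cs ! kk b, yy a} \<in> light_edges E w"
    using exit[OF ab(2)] ab(4) by auto
  have "kk a \<noteq> kk b" using same_exit[of a b] eb(2) ab by auto
  then obtain m where m: "m < ?L" "cycle_edge cs m = {cs ! kk a, cs ! kk b}" "w (cycle_edge cs m) = 4"
    using light_ear[OF ea(2) ea(1) eb(1) \<open>kk a \<noteq> kk b\<close> ea(4) eb(3)] by blast
  then have "m \<in> heavy" by (simp add: heavy_def)
  have "kk a = m \<and> kk b = Suc m mod ?L \<or> kk b = m \<and> kk a = Suc m mod ?L"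
    using cycle_edge_eq_doubletonD[OF distinct ea(1) eb(1) m(1)] m(2) by simp
  then have "a = m \<or> b = m" using same_exit[of a m] same_exit[of b m] ab \<open>m \<in> heavy\<close> by auto
  then show ?thesis
  proof
    assume "a = m"
    then show ?thesis using m by simp
  next
    assume "b = m"
    then show ?thesis using m by (simp add: insert_commute)
  qed
qed

lemma excess_fiber_le_3:
  assumes exit: "\<And>i. i \<in> heavy \<Longrightarrow> kk i < length cs \<and> yy i \<in> V - set cs \<and> arc (kk i) = arc i
      \<and> {cs ! kk i, yy i} \<in> light_edges E w"
  shows "(\<Sum>i\<in>{i \<in> heavy. yy i = z}. w (cycle_edge cs i) - 3) \<le> 3"
proof -
  let ?F = "{i \<in> heavy. yy i = z}"
  let ?P = "\<lambda>a b. a \<in> ?F \<and> b \<in> ?F \<and> cycle_edge cs a = {cs ! kk a, cs ! kk b}"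
  show ?thesis
  proof (rule sum_le_3_if_pairwise_pointing[where P = ?P])
    show "finite ?F" using finite_heavy by simp
    show "w (cycle_edge cs a) - 3 \<le> 2" if "a \<in> ?F" for a
      using cycle_edge_weight[of a] that by (auto simp: heavy_def)
    show "b = c" if "?P a b" "?P a c" for a b c
    proof -
      have "cs ! kk b = cs ! kk c" using that by (auto simp: doubleton_eq_iff)
      then have "kk b = kk c" using exit that distinct by (simp add: nth_eq_iff_index_eq)
      then have "arc b = arc c" using exit[of b] exit[of c] that by auto
      then show ?thesis using inj_on_arc that by (auto dest: inj_onD)
    qed
    show "?P a b \<and> w (cycle_edge cs a) - 3 \<le> 1 \<or> ?P b a \<and> w (cycle_edge cs b) - 3 \<le> 1"
      if ab: "a \<in> ?F" "b \<in> ?F" "a \<noteq> b" for a b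
    proof -
      have "a \<in> heavy" "b \<in> heavy" "yy a = yy b" using ab by auto
      then have "cycle_edge cs a = {cs ! kk a, cs ! kk b} \<and> w (cycle_edge cs a) = 4
          \<or> cycle_edge cs b = {cs ! kk b, cs ! kk a} \<and> w (cycle_edge cs b) = 4"
        using exits_into_same_vertex[of kk yy a b, OF exit] ab(3) by blast
      then show ?thesis using ab by (elim disjE conjE) simp_all
    qed
  qed
qed

lemma weight_le_3_card: "weight w cs \<le> 3 * card V"
proof -
  let ?L = "length cs" and ?excess = "\<lambda>i. w (cycle_edge cs i) - 3"
  have "\<forall>i\<in>heavy. \<exists>p. fst p < ?L \<and> snd p \<in> V - set cs \<and> arc (fst p) = arc i
      \<and> {cs ! fst p, snd p} \<in> light_edges E w"
    using light_exit by fastforce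
  from bchoice[OF this] obtain p where p: "\<forall>i\<in>heavy. fst (p i) < ?L \<and> snd (p i) \<in> V - set cs
      \<and> arc (fst (p i)) = arc i \<and> {cs ! fst (p i), snd (p i)} \<in> light_edges E w"
    by blast
  define yy where "yy i = snd (p i)" for i
  have fiber: "(\<Sum>i\<in>{i \<in> heavy. yy i = z}. ?excess i) \<le> 3" for z
    by (rule excess_fiber_le_3[where kk = "\<lambda>i. fst (p i)"]) (use p in \<open>auto simp: yy_def\<close>)
  have "weight w cs = (\<Sum>i<?L. 3 + ?excess i)"
    unfolding weight_conv_sum[OF distinct length_ge_3]
    by (rule sum.cong) (use cycle_edge_weight in fastforce)+
  also have "\<dots> = 3 * ?L + sum ?excess heavy"
    by (simp add: sum.distrib, rule sum.mono_neutral_right) (auto simp: heavy_def)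
  also have "sum ?excess heavy = (\<Sum>z\<in>yy ` heavy. \<Sum>i\<in>{i \<in> heavy. yy i = z}. ?excess i)"
    by (rule sum.image_gen[OF finite_heavy])
  also have "\<dots> \<le> (\<Sum>z\<in>yy ` heavy. 3)" by (rule sum_mono) (rule fiber)
  also have "\<dots> = 3 * card (yy ` heavy)" by simp
  also have "card (yy ` heavy) \<le> card (V - set cs)"
    using p weighted by (intro card_mono) (auto simp: yy_def weighted_graph_def simple_graph_def)
  also have "card (V - set cs) = card V - ?L"
    using cycle_vertices_subset[OF _ cycle] weighted distinct
    by (simp add: card_Diff_subset distinct_card weighted_graph_def simple_graph_def)
  finally have "weight w cs \<le> 3 * ?L + 3 * (card V - ?L)" by simp
  moreover have "?L \<le> card V" using weighted cycle length_cycle_le_card by (auto simp: weighted_graph_def)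
  ultimately show ?thesis by linarith
qed

end

section \<open>Cutting off an ear\<close>

(* Deleting every edge that meets the far arc cuts the light paths through it; the new light edge
   {pendant, y} gives the ear take (Suc j) cs @ [y] an exit again, and being pendant it lies on no
   cycle. *)
locale ear_deletion =
  fixes V :: "'a set" and E :: "'a set set" and w :: "'a set \<Rightarrow> nat" and cs :: "'a list"
    and j :: nat and y :: 'a
  assumes weighted: "weighted_graph V E w"
    and cycle: "is_cycle E cs"
    and escapes: "escapes V E w cs"
    and no_light_chord: "\<And>a b. a \<in> set cs \<Longrightarrow> b \<in> set cs \<Longrightarrow> {a, b} \<in> light_edges E w \<Longrightarrow>
      {a, b} \<in> cycle_edges cs"
    and j: "1 \<le> j" "j + 2 \<le> length cs"
    and y: "y \<in> V" "y \<notin> set cs"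
    and light_0: "{cs ! 0, y} \<in> light_edges E w" and light_j: "{cs ! j, y} \<in> light_edges E w"
begin

abbreviation ear :: "'a list" where
  "ear \<equiv> take (Suc j) cs @ [y]"

definition near_arc :: "'a set" where
  "near_arc = set (take (Suc j) cs)"

definition far_arc :: "'a set" where
  "far_arc = set (drop (Suc j) cs)"

definition pendant :: 'a where
  "pendant = cs ! Suc j"

definition reduced_edges :: "'a set set" where
  "reduced_edges = insert {pendant, y} {e \<in> E. e \<inter> far_arc = {}}"

definition reduced_weight :: "'a set \<Rightarrow> nat" where
  "reduced_weight = w({pendant, y} := 3)"

lemma distinct: "distinct cs" and length_ge_3: "3 \<le> length cs"
  using cycle by (auto simp: is_cycle_def)

lemma set_cs: "set cs = near_arc \<union> far_arc"
  unfolding near_arc_def far_arc_def by (metis append_take_drop_id set_append)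

lemma arcs_disjoint: "near_arc \<inter> far_arc = {}"
  unfolding near_arc_def far_arc_def using distinct by (rule set_take_disj_set_drop_if_distinct) simp

lemma pendant_in_far_arc: "pendant \<in> far_arc"
proof -
  have "drop (Suc j) cs ! 0 = pendant" "0 < length (drop (Suc j) cs)"
    using j unfolding pendant_def by auto
  then show ?thesis unfolding far_arc_def by (metis nth_mem)
qed

lemma last_in_far_arc: "cs ! (length cs - 1) \<in> far_arc"
proof -
  have "Suc j + (length cs - 1 - Suc j) = length cs - 1" using j by simp
  then have "drop (Suc j) cs ! (length cs - 1 - Suc j) = cs ! (length cs - 1)"
    using j nth_drop[of "Suc j" cs "length cs - 1 - Suc j"] by simp
  moreover have "length cs - 1 - Suc j < length (drop (Suc j) cs)" using j by simp
  ultimately show ?thesis unfolding far_arc_def by (metis nth_mem)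
qed

lemma nth_in_near_arc:
  assumes "k \<le> j"
  shows "cs ! k \<in> near_arc"
proof -
  have "take (Suc j) cs ! k = cs ! k" "k < length (take (Suc j) cs)" using assms j by auto
  then show ?thesis unfolding near_arc_def by (metis nth_mem)
qed

lemma y_notin_arcs: "y \<notin> near_arc" "y \<notin> far_arc"
  using y(2) set_cs by auto

lemma pendant_ne_y: "pendant \<noteq> y"
  using pendant_in_far_arc y_notin_arcs by blast

lemma pendant_in_V: "pendant \<in> V"
  using pendant_in_far_arc set_cs cycle_vertices_subset[OF _ cycle] weighted
  by (auto simp: weighted_graph_def)

lemma set_ear: "set ear = insert y near_arc"
  by (simp add: near_arc_def)

lemma reduced_edge_cases:
  assumes "e \<in> reduced_edges"
  shows "e = {pendant, y} \<or> e \<in> E \<and> e \<inter> far_arc = {}"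
  using assms by (auto simp: reduced_edges_def)

lemma reduced_weighted_graph: "weighted_graph V reduced_edges reduced_weight"
  unfolding weighted_graph_def simple_graph_def
proof (intro conjI ballI)
  show "finite V" using weighted by (simp add: weighted_graph_def simple_graph_def)
next
  fix e assume "e \<in> reduced_edges"
  then consider "e = {pendant, y}" | "e \<in> E" by (auto simp: reduced_edges_def)
  then show "\<exists>u v. e = {u, v} \<and> u \<noteq> v \<and> u \<in> V \<and> v \<in> V"
  proof cases
    case 1
    then show ?thesis using pendant_ne_y pendant_in_V y(1) by blast
  next
    case 2
    then show ?thesis using weighted by (auto simp: weighted_graph_def simple_graph_def)
  qed
  show "reduced_weight e \<in> {3, 4, 5}"
    using \<open>e \<in> reduced_edges\<close> weighted by (auto simp: reduced_weight_def reduced_edges_def weighted_graph_def)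
qed

lemma card_reduced_edges_less: "card reduced_edges < card E"
proof -
  let ?L = "length cs"
  let ?e1 = "cycle_edge cs j" and ?e2 = "cycle_edge cs (?L - 1)"
  have in_E: "?e1 \<in> E" "?e2 \<in> E"
    using cycle j cycle_edge_in_cycle_edges[of j cs] cycle_edge_in_cycle_edges[of "?L - 1" cs]
    by (auto simp: is_cycle_def)
  have "?e1 \<noteq> ?e2"
    using inj_on_cycle_edge[OF distinct length_ge_3] j by (auto simp: inj_on_eq_iff)
  moreover have "pendant \<in> ?e1" using j by (simp add: cycle_edge_def pendant_def)
  moreover have "cs ! (?L - 1) \<in> ?e2" by (simp add: cycle_edge_def)
  ultimately have "{e \<in> E. e \<inter> far_arc = {}} \<subseteq> E - {?e1, ?e2}" "card (E - {?e1, ?e2}) = card E - 2"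
    using in_E pendant_in_far_arc last_in_far_arc by auto
  moreover have "finite E" using weighted simple_graph_finite_edges by (auto simp: weighted_graph_def)
  ultimately have "card {e \<in> E. e \<inter> far_arc = {}} \<le> card E - 2"
    by (metis (no_types, lifting) card_mono finite_Diff)
  moreover have "card reduced_edges \<le> Suc (card {e \<in> E. e \<inter> far_arc = {}})"
    unfolding reduced_edges_def by (rule card_insert_le_m1) simp_all
  moreover have "2 \<le> card E" using in_E \<open>?e1 \<noteq> ?e2\<close> \<open>finite E\<close>
    by (metis card_2_iff card_mono empty_subsetI insert_subset)
  ultimately show ?thesis by linarith
qed

lemma ear_edges:
  assumes "e \<in> cycle_edges ear"
  shows "e \<in> E" "e \<inter> far_arc = {}"
proof -
  have jL: "j < length cs" using j by simp
  have near: "cycle_edge cs i \<subseteq> near_arc" if "i < j" for i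
    using that jL nth_in_near_arc[of i] nth_in_near_arc[of "Suc i"] by (simp add: cycle_edge_def)
  consider i where "i < j" "e = cycle_edge cs i" | "e = {cs ! j, y}" | "e = {y, cs ! 0}"
    using assms cycle_edges_ear[OF jL] by auto
  then have "e \<in> E \<and> e \<inter> far_arc = {}"
  proof cases
    case (1 i)
    then show ?thesis
      using cycle jL near[of i] arcs_disjoint cycle_edge_in_cycle_edges[of i cs]
      by (auto simp: is_cycle_def)
  next
    case 2
    then show ?thesis
      using light_j arcs_disjoint y_notin_arcs nth_in_near_arc[of j] by (auto simp: light_edges_def)
  next
    case 3
    then show ?thesis
      using light_0 arcs_disjoint y_notin_arcs nth_in_near_arc[of 0] by (auto simp: light_edges_def insert_commute)
  qed
  then show "e \<in> E" "e \<inter> far_arc = {}" by auto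
qed

lemma ear_cycle: "is_cycle reduced_edges ear"
proof -
  have "distinct ear" using distinct y(2) by (auto dest: in_set_takeD)
  then show ?thesis using j ear_edges by (auto simp: is_cycle_def reduced_edges_def)
qed

lemma weight_reduced_ear: "weight reduced_weight ear = weight w ear"
  unfolding weight_def reduced_weight_def
  by (rule sum.cong) (use ear_edges pendant_in_far_arc in auto)

lemma reduced_cycle:
  assumes "is_cycle reduced_edges D"
  shows "is_cycle E D" "weight reduced_weight D = weight w D"
proof -
  have "{pendant, y} \<notin> cycle_edges D"
  proof
    assume "{pendant, y} \<in> cycle_edges D"
    then have "pendant \<in> set D" using cycle_edges_subset_set by blast
    then obtain e e' where "e \<in> cycle_edges D" "e' \<in> cycle_edges D" "pendant \<in> e" "pendant \<in> e'" "e \<noteq> e'"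
      using assms cycle_vertex_in_two_edges by (metis is_cycle_def)
    then show False using assms pendant_in_far_arc reduced_edge_cases by (auto simp: is_cycle_def)
  qed
  then have "cycle_edges D \<subseteq> E" using assms reduced_edge_cases by (auto simp: is_cycle_def)
  then show "is_cycle E D" using assms by (simp add: is_cycle_def)
  show "weight reduced_weight D = weight w D"
    unfolding weight_def reduced_weight_def
    by (rule sum.cong) (use \<open>{pendant, y} \<notin> cycle_edges D\<close> in auto)
qed

abbreviation reduced_light :: "('a \<times> 'a) set" where
  "reduced_light \<equiv> edge_rel (light_edges reduced_edges reduced_weight)"

lemma light_edge_reduced:
  assumes "{a, b} \<in> light_edges E w" "a \<notin> far_arc" "b \<notin> far_arc"
  shows "(a, b) \<in> reduced_light"
proof -
  have "{a, b} \<noteq> {pendant, y}" using assms(2,3) pendant_in_far_arc by auto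
  then show ?thesis
    using assms by (auto simp: light_edges_def reduced_edges_def reduced_weight_def)
qed

lemma pendant_edge_light: "(y, pendant) \<in> reduced_light"
  by (simp add: light_edges_def reduced_edges_def reduced_weight_def insert_commute)

lemma pendant_outside_ear: "pendant \<in> V - set ear"
  using pendant_in_V pendant_in_far_arc pendant_ne_y arcs_disjoint set_ear by auto

lemma light_path_from_near_arc:
  assumes "x \<in> near_arc" "(x, v) \<in> (edge_rel (light_edges E w))\<^sup>*"
  shows "v \<in> near_arc \<and> (x, v) \<in> reduced_light\<^sup>* \<or> (x, y) \<in> reduced_light\<^sup>*
    \<or> (\<exists>z\<in>V - set ear. (x, z) \<in> reduced_light\<^sup>*)"
  using assms(2)
proof (induction rule: rtrancl_induct)
  case base
  then show ?case using assms(1) by simp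
next
  case (step v v')
  show ?case
  proof (cases "v \<in> near_arc \<and> (x, v) \<in> reduced_light\<^sup>*")
    case True
    then have v: "v \<in> near_arc" "(x, v) \<in> reduced_light\<^sup>*" "v \<notin> far_arc"
      using arcs_disjoint by auto
    have light: "{v, v'} \<in> light_edges E w" using step.hyps(2) by simp
    consider "v' \<in> near_arc" | "v' \<in> far_arc" | "v' \<notin> set cs" using set_cs by blast
    then show ?thesis
    proof cases
      case 1
      then have "(v, v') \<in> reduced_light" using light v(3) arcs_disjoint light_edge_reduced by blast
      with v(2) have "(x, v') \<in> reduced_light\<^sup>*" by (rule rtrancl_into_rtrancl)
      then show ?thesis using 1 by simp
    next
      case 2
      then have "{v, v'} \<in> cycle_edges cs" using no_light_chord light v(1) set_cs by blast
      then have "v = cs ! 0 \<or> v = cs ! j"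
        using cycle_edge_across_split[OF distinct] 2 v(1) j unfolding near_arc_def far_arc_def by simp
      then have "{v, y} \<in> light_edges E w" using light_0 light_j by auto
      then have "(v, y) \<in> reduced_light" using v(3) y_notin_arcs light_edge_reduced by blast
      with v(2) have "(x, y) \<in> reduced_light\<^sup>*" by (rule rtrancl_into_rtrancl)
      then show ?thesis by simp
    next
      case 3
      then have "(v, v') \<in> reduced_light" using light v(3) set_cs light_edge_reduced by blast
      with v(2) have path: "(x, v') \<in> reduced_light\<^sup>*" by (rule rtrancl_into_rtrancl)
      have "v' \<in> V"
        using light weighted simple_graph_doubletonD(2) by (auto simp: light_edges_def weighted_graph_def)
      then show ?thesis using path 3 set_cs set_ear by (cases "v' = y") auto
    qed
  qed (use step.IH in auto)
qed

lemma escapes_ear: "escapes V reduced_edges reduced_weight ear"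
  unfolding escapes_def
proof
  fix x assume "x \<in> set ear"
  have to_pendant: "\<exists>z\<in>V - set ear. (x, z) \<in> reduced_light\<^sup>*" if "(x, y) \<in> reduced_light\<^sup>*"
    using that pendant_edge_light pendant_outside_ear by (meson rtrancl_into_rtrancl)
  show "\<exists>z\<in>V - set ear. (x, z) \<in> reduced_light\<^sup>*"
  proof (cases "x = y")
    case True
    then show ?thesis using to_pendant by simp
  next
    case False
    then have x: "x \<in> near_arc" using \<open>x \<in> set ear\<close> by (simp add: near_arc_def)
    then obtain z where "z \<in> V - set cs" "(x, z) \<in> (edge_rel (light_edges E w))\<^sup>*"
      using escapes set_cs unfolding escapes_def by blast
    then show ?thesis using light_path_from_near_arc[OF x] to_pendant set_cs by blast
  qed
qed

end

section \<open>A minimal counterexample\<close>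

locale minimal_counterexample =
  fixes V :: "'a set" and E :: "'a set set" and w :: "'a set \<Rightarrow> nat"
  assumes weighted: "weighted_graph V E w"
    and minimal: "\<And>E' w' D. card E' < card E \<Longrightarrow> weighted_graph V E' w' \<Longrightarrow> is_cycle E' D \<Longrightarrow>
      odd (weight w' D) \<Longrightarrow> escapes V E' w' D \<Longrightarrow> has_short_odd_cycle V E' w'"
    and no_short: "\<not> has_short_odd_cycle V E w"
begin

lemma finite_edges: "finite E"
  using weighted simple_graph_finite_edges by (auto simp: weighted_graph_def)

lemma no_odd_escaping_cycle_after_deletion:
  assumes "e \<in> E" "is_cycle (E - {e}) D" "odd (weight w D)" "escapes V (E - {e}) w D"
  shows False
proof -
  have "has_short_odd_cycle V (E - {e}) w"
    using minimal[OF card_Diff1_less[OF finite_edges assms(1)]] weighted_graph_subset[OF weighted] assms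
    by blast
  then show False using no_short has_short_odd_cycle_mono by blast
qed

lemma chord_arc_even:
  assumes cycle: "is_cycle E cs" and escapes: "escapes V E w cs"
    and j: "2 \<le> j" "j + 2 \<le> length cs"
    and chord: "{cs ! 0, cs ! j} \<in> light_edges E w" "{cs ! 0, cs ! j} \<notin> cycle_edges cs"
  shows "even (weight w (take (Suc j) cs))"
proof (rule ccontr)
  assume "odd (weight w (take (Suc j) cs))"
  have dist: "distinct cs" and L3: "3 \<le> length cs" using cycle by (auto simp: is_cycle_def)
  obtain i where i: "j \<le> i" "i < length cs" and light_conn:
    "(edge_rel (light_edges E w))\<^sup>* \<subseteq> (edge_rel (light_edges (E - {cycle_edge cs i}) w))\<^sup>*"
    using light_arc_edge_removable[OF cycle _ chord(1)] j by auto
  have "cycle_edges (take (Suc j) cs) \<subseteq> E - {cycle_edge cs i}"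
  proof
    fix e assume "e \<in> cycle_edges (take (Suc j) cs)"
    then consider k where "k < j" "e = cycle_edge cs k" | "e = {cs ! 0, cs ! j}"
      using cycle_edges_take[of j cs] j by (auto simp: insert_commute)
    then show "e \<in> E - {cycle_edge cs i}"
    proof cases
      case (1 k)
      then show ?thesis
        using cycle i inj_on_cycle_edge[OF dist L3] cycle_edge_in_cycle_edges[of k cs]
        by (auto simp: is_cycle_def inj_on_eq_iff)
    next
      case 2
      then show ?thesis
        using chord i(2) cycle_edge_in_cycle_edges[of i cs] by (auto simp: light_edges_def)
    qed
  qed
  then have "is_cycle (E - {cycle_edge cs i}) (take (Suc j) cs)"
    using dist j by (simp add: is_cycle_def)
  moreover have "escapes V (E - {cycle_edge cs i}) w (take (Suc j) cs)"
    using escapes_subcycle[OF escapes set_take_subset light_conn] .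
  moreover have "cycle_edge cs i \<in> E"
    using cycle i cycle_edge_in_cycle_edges by (auto simp: is_cycle_def)
  ultimately show False
    using no_odd_escaping_cycle_after_deletion \<open>odd (weight w (take (Suc j) cs))\<close> by blast
qed

lemma light_chord_is_cycle_edge:
  assumes cycle: "is_cycle E cs" and odd: "odd (weight w cs)" and escapes: "escapes V E w cs"
    and ab: "a \<in> set cs" "b \<in> set cs" "{a, b} \<in> light_edges E w"
  shows "{a, b} \<in> cycle_edges cs"
proof (rule ccontr)
  assume not_edge: "{a, b} \<notin> cycle_edges cs"
  let ?L = "length cs"
  have dist: "distinct cs" and L3: "3 \<le> ?L" using cycle by (auto simp: is_cycle_def)
  obtain p q where pq: "p < ?L" "q < ?L" "a = cs ! p" "b = cs ! q" using ab by (auto simp: in_set_conv_nth)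
  have "{a, b} \<in> E" using ab(3) by (simp add: light_edges_def)
  then have "a \<noteq> b" using simple_graph_doubletonD(3)[of V E a b] weighted by (simp add: weighted_graph_def)
  then have "p \<noteq> q" using pq by auto
  obtain j where "0 < j" "j < ?L" "rotate p cs ! 0 = cs ! p" "rotate p cs ! j = cs ! q"
    by (rule rotate_to_front[OF dist pq(1,2) \<open>p \<noteq> q\<close>])
  then have j: "0 < j" "j < ?L" "rotate p cs ! 0 = a" "rotate p cs ! j = b" using pq(3,4) by simp_all
  define rot where "rot = rotate p cs"
  have rot: "is_cycle E rot" "odd (weight w rot)" "escapes V E w rot" "cycle_edges rot = cycle_edges cs"
    "length rot = ?L" "distinct rot"
    using cycle odd escapes dist by (simp_all add: rot_def)
  have "j \<noteq> 1"
  proof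
    assume "j = 1"
    then have "cycle_edge rot 0 = {a, b}" using j L3 by (simp add: cycle_edge_def rot_def)
    moreover have "0 < length rot" using j rot(5) by linarith
    then have "cycle_edge rot 0 \<in> cycle_edges cs" using cycle_edge_in_cycle_edges rot(4) by blast
    ultimately show False using not_edge by simp
  qed
  moreover have "j \<noteq> ?L - 1"
  proof
    assume "j = ?L - 1"
    moreover have "rot \<noteq> []" using L3 rot(5) by (cases rot) auto
    ultimately have "cycle_edge rot j = {b, a}" using j rot(5) cycle_edge_last[of rot] by (simp add: rot_def)
    moreover have "cycle_edge rot j \<in> cycle_edges cs" using cycle_edge_in_cycle_edges[of j rot] rot j by simp
    ultimately show False using not_edge by (simp add: insert_commute)
  qed
  ultimately have j2: "2 \<le> j" "j + 2 \<le> ?L" using j by auto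
  have chord: "{rot ! 0, rot ! j} \<in> light_edges E w" "{rot ! 0, rot ! j} \<notin> cycle_edges rot"
    using ab(3) not_edge j rot by (simp_all add: rot_def)
  have "rotate j rot ! 0 = rot ! j" "rotate j rot ! (?L - j) = rot ! 0"
    using j rot(5) rotate_nth_0[of j rot] rotate_nth_length_diff[of j rot] by simp_all
  then have "even (weight w (take (Suc (?L - j)) (rotate j rot)))"
    using chord_arc_even[of "rotate j rot" "?L - j"] rot j2 chord by (simp add: insert_commute)
  moreover have "even (weight w (take (Suc j) rot))"
    using chord_arc_even[OF rot(1,3)] j2 chord rot by simp
  ultimately have "even (weight w rot + 2 * w {rot ! 0, rot ! j})"
    using weight_chord_split[OF rot(6), of j w] j2 rot(5) by (metis even_add)
  with rot(2) show False by simp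
qed

lemma ear_even:
  assumes cycle: "is_cycle E cs" and odd: "odd (weight w cs)" and escapes: "escapes V E w cs"
    and j: "1 \<le> j" "j + 2 \<le> length cs" and y: "y \<in> V" "y \<notin> set cs"
    and light: "{cs ! 0, y} \<in> light_edges E w" "{cs ! j, y} \<in> light_edges E w"
  shows "even (weight w (take (Suc j) cs @ [y]))"
proof (rule ccontr)
  assume odd_ear: "odd (weight w (take (Suc j) cs @ [y]))"
  interpret ear_deletion V E w cs j y
    using weighted cycle escapes light_chord_is_cycle_edge[OF cycle odd escapes] j y light
    by unfold_locales auto
  obtain D where D: "is_cycle reduced_edges D" "odd (weight reduced_weight D)"
    "weight reduced_weight D \<le> 3 * card V"
    using minimal[OF card_reduced_edges_less reduced_weighted_graph ear_cycle _ escapes_ear]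
      odd_ear weight_reduced_ear
    unfolding has_short_odd_cycle_def by auto
  then show False
    using reduced_cycle[OF D(1)] no_short unfolding has_short_odd_cycle_def by auto
qed

lemma light_ear_at_front:
  assumes cycle: "is_cycle E cs" and odd: "odd (weight w cs)" and escapes: "escapes V E w cs"
    and j: "1 \<le> j" "j < length cs" and y: "y \<in> V" "y \<notin> set cs"
    and light: "{cs ! 0, y} \<in> light_edges E w" "{cs ! j, y} \<in> light_edges E w"
  shows "\<exists>m<length cs. cycle_edge cs m = {cs ! 0, cs ! j} \<and> w (cycle_edge cs m) = 4"
proof -
  let ?L = "length cs" and ?rot = "rotate j cs"
  let ?ear1 = "take (Suc j) cs @ [y]" and ?ear2 = "take (Suc (?L - j)) ?rot @ [y]"
  have dist: "distinct cs" and L3: "3 \<le> ?L" using cycle by (auto simp: is_cycle_def)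
  have w3: "w {cs ! 0, y} = 3" "w {cs ! j, y} = 3" using light by (auto simp: light_edges_def)
  have weight4: "w (cycle_edge cs i) = 4" if "i < ?L" "even (w (cycle_edge cs i) + 6)" for i
    using that weighted cycle cycle_edge_in_cycle_edges[OF that(1)]
    by (fastforce simp: weighted_graph_def is_cycle_def)
  have split: "weight w ?ear1 + weight w ?ear2 = weight w cs + 12"
    using weight_ear_split[OF dist L3 y(2) j] w3 by simp
  have ear1: "weight w ?ear1 = (\<Sum>i<j. w (cycle_edge cs i)) + 6"
    using weight_ear[OF dist y(2) j] w3 by (simp add: insert_commute)
  have total: "weight w cs = (\<Sum>i<j. w (cycle_edge cs i)) + (\<Sum>i\<in>{j..<?L}. w (cycle_edge cs i))"
    using sum_cycle_edge_split[OF dist L3, of j w] j by simp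
  consider "odd (weight w ?ear1)" "even (weight w ?ear2)" | "even (weight w ?ear1)" "odd (weight w ?ear2)"
    using split odd by (metis even_add even_numeral)
  then show ?thesis
  proof cases
    case 1
    have "j = ?L - 1"
      using ear_even[OF cycle odd escapes j(1) _ y light] 1(1) j(2) by fastforce
    then have "{j..<?L} = {?L - 1}" using L3 by auto
    then have "even (w (cycle_edge cs (?L - 1)) + 6)" using 1(2) split ear1 total by simp
    moreover have "cs \<noteq> []" using L3 by (cases cs) auto
    then have "cycle_edge cs (?L - 1) = {cs ! 0, cs ! j}"
      using \<open>j = ?L - 1\<close> cycle_edge_last[of cs] by (simp add: insert_commute)
    moreover have "?L - 1 < ?L" using L3 by simp
    ultimately show ?thesis using weight4[of "?L - 1"] by auto
  next
    case 2
    have rot: "is_cycle E ?rot" "odd (weight w ?rot)" "escapes V E w ?rot" "length ?rot = ?L"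
      "?rot ! 0 = cs ! j" "?rot ! (?L - j) = cs ! 0"
      using cycle odd escapes j by (simp_all add: rotate_nth_0 rotate_nth_length_diff)
    have "j = 1"
      using ear_even[OF rot(1-3), of "?L - j" y] 2(2) j y rot light by (fastforce simp: insert_commute)
    then have "even (w (cycle_edge cs 0) + 6)" using 2(1) ear1 by simp
    moreover have "cycle_edge cs 0 = {cs ! 0, cs ! j}" using \<open>j = 1\<close> L3 by (simp add: cycle_edge_def)
    moreover have "0 < ?L" using L3 by linarith
    ultimately show ?thesis using weight4[OF \<open>0 < ?L\<close>] by auto
  qed
qed

lemma light_ear_weight_4:
  assumes cycle: "is_cycle E cs" and odd: "odd (weight w cs)" and escapes: "escapes V E w cs"
    and y: "y \<in> V - set cs" and pq: "p < length cs" "q < length cs" "p \<noteq> q"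
    and light: "{cs ! p, y} \<in> light_edges E w" "{cs ! q, y} \<in> light_edges E w"
  shows "\<exists>m<length cs. cycle_edge cs m = {cs ! p, cs ! q} \<and> w (cycle_edge cs m) = 4"
proof -
  let ?L = "length cs"
  have dist: "distinct cs" using cycle by (simp add: is_cycle_def)
  obtain j where j: "0 < j" "j < ?L" "rotate p cs ! 0 = cs ! p" "rotate p cs ! j = cs ! q"
    by (rule rotate_to_front[OF dist pq])
  then obtain m where m: "m < ?L" "cycle_edge (rotate p cs) m = {cs ! p, cs ! q}"
    "w (cycle_edge (rotate p cs) m) = 4"
    using light_ear_at_front[of "rotate p cs" j y] cycle odd escapes y light by auto
  moreover have "cycle_edge (rotate p cs) m = cycle_edge cs ((m + p) mod ?L)"
    using m(1) by (simp add: cycle_edge_rotate)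
  moreover have "(m + p) mod ?L < ?L" using m(1) by (rule mod_less_if_less)
  ultimately show ?thesis by metis
qed

lemma odd_escaping_cycle_impossible:
  assumes cycle: "is_cycle E cs" and odd: "odd (weight w cs)" and escapes: "escapes V E w cs"
  shows False
proof -
  let ?L = "length cs"
  have dist: "distinct cs" and L3: "3 \<le> ?L" using cycle by (auto simp: is_cycle_def)
  have long: "3 * card V < weight w cs"
    using no_short cycle odd by (auto simp: has_short_odd_cycle_def)
  have "\<exists>p<?L. w (cycle_edge cs p) \<noteq> 3"
  proof (rule ccontr)
    assume "\<not> (\<exists>p<?L. w (cycle_edge cs p) \<noteq> 3)"
    then have "weight w cs = 3 * ?L" by (simp add: weight_conv_sum[OF dist L3])
    moreover have "?L \<le> card V"
      using weighted cycle length_cycle_le_card by (auto simp: weighted_graph_def)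
    ultimately show False using long by simp
  qed
  then obtain p where p: "p < ?L" "w (cycle_edge cs p) \<noteq> 3" by blast
  define rot where "rot = rotate (Suc p) cs"
  have "?L - 1 + Suc p = p + ?L" using L3 by simp
  then have "(?L - 1 + Suc p) mod ?L = p" using p(1) by simp
  moreover have "cycle_edge rot (?L - 1) = cycle_edge cs ((?L - 1 + Suc p) mod ?L)"
    unfolding rot_def by (rule cycle_edge_rotate) (use L3 in simp)
  moreover have "length rot = ?L" by (simp add: rot_def)
  ultimately have last: "cycle_edge rot (length rot - 1) = cycle_edge cs p" by simp
  interpret rot: charging V E w rot
  proof
    show "weighted_graph V E w" "is_cycle E rot" "escapes V E w rot"
      using weighted cycle escapes by (simp_all add: rot_def del: rotate_Suc)
    show "w (cycle_edge rot (length rot - 1)) \<noteq> 3" using last p(2) by simp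
    show "{a, b} \<in> cycle_edges rot"
      if "a \<in> set rot" "b \<in> set rot" "{a, b} \<in> light_edges E w" for a b
      using light_chord_is_cycle_edge[OF cycle odd escapes] that by (simp add: rot_def del: rotate_Suc)
    show "\<exists>m<length rot. cycle_edge rot m = {rot ! p', rot ! q} \<and> w (cycle_edge rot m) = 4"
      if "y \<in> V - set rot" "p' < length rot" "q < length rot" "p' \<noteq> q"
        "{rot ! p', y} \<in> light_edges E w" "{rot ! q, y} \<in> light_edges E w" for y p' q
      using light_ear_weight_4[of rot y p' q] cycle odd escapes that by (simp add: rot_def del: rotate_Suc)
  qed
  have "weight w cs \<le> 3 * card V" using rot.weight_le_3_card by (simp add: rot_def del: rotate_Suc)
  then show False using long by simp
qed

end

theorem has_short_odd_cycle_if_escaping: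
  assumes "weighted_graph V E w" "is_cycle E cs" "odd (weight w cs)" "escapes V E w cs"
  shows "has_short_odd_cycle V E w"
  using assms
proof (induction "card E" arbitrary: E w cs rule: less_induct)
  case less
  show ?case
  proof (rule ccontr)
    assume "\<not> has_short_odd_cycle V E w"
    then interpret minimal_counterexample V E w
      using less by unfold_locales blast+
    show False using odd_escaping_cycle_impossible less.prems by blast
  qed
qed

section \<open>The neighbourhood of a non-spanning odd cycle\<close>

definition induced_edges :: "'a set set \<Rightarrow> 'a set \<Rightarrow> 'a set set" where
  "induced_edges E X = {e \<in> E. e \<subseteq> X}"

lemma N1_subset:
  assumes "simple_graph V E" "S \<subseteq> V"
  shows "N1 E S \<subseteq> V"
proof
  fix v assume "v \<in> N1 E S"
  then consider "v \<in> S" | u where "{u, v} \<in> E" unfolding N1_def by blast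
  then show "v \<in> V"
    by cases (use assms simple_graph_doubletonD(2)[OF assms(1)] in auto)
qed

lemma weighted_graph_induced:
  assumes "weighted_graph V E w" "X \<subseteq> V"
  shows "weighted_graph X (induced_edges E X) w"
  unfolding weighted_graph_def simple_graph_def
proof (intro conjI ballI)
  show "finite X" using assms finite_subset by (auto simp: weighted_graph_def simple_graph_def)
next
  fix e assume e: "e \<in> induced_edges E X"
  then have "e \<in> E" "e \<subseteq> X" by (auto simp: induced_edges_def)
  moreover have "simple_graph V E" using assms(1) by (simp add: weighted_graph_def)
  ultimately obtain u v where "e = {u, v}" "u \<noteq> v" by (auto elim: simple_graph_edgeD)
  then show "\<exists>u v. e = {u, v} \<and> u \<noteq> v \<and> u \<in> X \<and> v \<in> X" using \<open>e \<subseteq> X\<close> by blast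
  show "w e \<in> {3, 4, 5}" using assms(1) \<open>e \<in> E\<close> by (simp add: weighted_graph_def)
qed

lemma is_cycle_induced: "is_cycle E cs \<Longrightarrow> set cs \<subseteq> X \<Longrightarrow> is_cycle (induced_edges E X) cs"
  unfolding is_cycle_def induced_edges_def using cycle_edges_subset_set by fastforce

lemma escapes_N1:
  assumes "escapes V E w cs"
  shows "escapes (N1 E (set cs)) (induced_edges E (N1 E (set cs))) w cs"
  unfolding escapes_def
proof
  fix x assume x: "x \<in> set cs"
  let ?X = "N1 E (set cs)" and ?R = "edge_rel (light_edges (induced_edges E (N1 E (set cs))) w)"
  have "v \<in> set cs \<and> (x, v) \<in> ?R\<^sup>* \<or> (\<exists>z\<in>?X - set cs. (x, z) \<in> ?R\<^sup>*)"
    if "(x, v) \<in> (edge_rel (light_edges E w))\<^sup>*" for v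
    using that
  proof (induction rule: rtrancl_induct)
    case (step v v')
    show ?case
    proof (cases "v \<in> set cs \<and> (x, v) \<in> ?R\<^sup>*")
      case True
      have light: "{v, v'} \<in> E" "w {v, v'} = 3" using step.hyps(2) by (simp_all add: light_edges_def)
      have "v' \<in> ?X" using True light(1) unfolding N1_def by blast
      moreover have "v \<in> ?X" using True unfolding N1_def by blast
      ultimately have "(v, v') \<in> ?R" using light by (simp add: light_edges_def induced_edges_def)
      then have "(x, v') \<in> ?R\<^sup>*" using True by (meson rtrancl_into_rtrancl)
      then show ?thesis using \<open>v' \<in> ?X\<close> by blast
    qed (use step.IH in blast)
  qed (use x in simp)
  then show "\<exists>z\<in>?X - set cs. (x, z) \<in> ?R\<^sup>*"
    using assms x unfolding escapes_def by blast
qed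

lemma escapes_if_light_spanning_tree:
  assumes "spanning_tree V E T" "\<forall>e\<in>T. w e = 3" "set cs \<subseteq> V" "set cs \<noteq> V"
  shows "escapes V E w cs"
  unfolding escapes_def
proof
  fix x assume "x \<in> set cs"
  obtain z where z: "z \<in> V - set cs" using assms(3,4) by blast
  have "x \<in> V" using assms(3) \<open>x \<in> set cs\<close> by blast
  then have "(x, z) \<in> (edge_rel T)\<^sup>*" using assms(1) z by (simp add: spanning_tree_def)
  moreover have "T \<subseteq> light_edges E w" using assms(1,2) by (auto simp: spanning_tree_def light_edges_def)
  ultimately have "(x, z) \<in> (edge_rel (light_edges E w))\<^sup>*" using rtrancl_edge_rel_mono by blast
  then show "\<exists>z\<in>V - set cs. (x, z) \<in> (edge_rel (light_edges E w))\<^sup>*" using z by blast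
qed

theorem lemma2p5:
  fixes k :: nat and V :: "'a set" and E :: "'a set set" and \<omega> :: "'a set \<Rightarrow> nat" and cs :: "'a list"
  assumes "k \<ge> 8"
    and "simple_graph V E"
    and "good_weighting k V E \<omega>"
    and "is_cycle E cs"
    and "odd (weight \<omega> cs)"
    and "set cs \<noteq> V"
  shows "real (card (N1 E (set cs))) \<ge> (2 * real k + 1) / 3"
proof -
  let ?X = "N1 E (set cs)"
  have weights: "\<forall>e\<in>E. \<omega> e \<in> {3, 4, 5}"
    and no_short_odd: "\<forall>D. is_cycle E D \<longrightarrow> \<not> (odd (weight \<omega> D) \<and> weight \<omega> D < 2 * k + 1)"
    and "\<exists>T. spanning_tree V E T \<and> (\<forall>e\<in>T. \<omega> e = 3)"
    using assms(3) unfolding good_weighting_def by auto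
  then obtain T where T: "spanning_tree V E T" "\<forall>e\<in>T. \<omega> e = 3" by blast
  have weighted: "weighted_graph V E \<omega>" using assms(2) weights by (simp add: weighted_graph_def)
  have cs_V: "set cs \<subseteq> V" using cycle_vertices_subset[OF assms(2,4)] .
  have "has_short_odd_cycle ?X (induced_edges E ?X) \<omega>"
  proof (rule has_short_odd_cycle_if_escaping)
    show "weighted_graph ?X (induced_edges E ?X) \<omega>"
      using weighted_graph_induced[OF weighted N1_subset[OF assms(2) cs_V]] .
    show "is_cycle (induced_edges E ?X) cs" using is_cycle_induced[OF assms(4)] by (simp add: N1_def)
    show "escapes ?X (induced_edges E ?X) \<omega> cs"
      using escapes_N1[OF escapes_if_light_spanning_tree[OF T cs_V assms(6)]] .
  qed (rule assms(5))
  then have "has_short_odd_cycle ?X E \<omega>"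
    by (rule has_short_odd_cycle_mono) (auto simp: induced_edges_def)
  then obtain D where "is_cycle E D" "odd (weight \<omega> D)" "weight \<omega> D \<le> 3 * card ?X"
    unfolding has_short_odd_cycle_def by blast
  then have "2 * k + 1 \<le> 3 * card ?X" using no_short_odd by auto
  then have "2 * real k + 1 \<le> 3 * real (card ?X)" by linarith
  then show ?thesis by simp
qed

end
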